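(* Let $X,Y$ be real Banach spaces, $C\subseteq X$ nonempty and closed, $D\subseteq Y$ nonempty, $g:X\to Y$, and $x_0\in g^{-1}(D)\cap C$. Suppose $g$ is locally Lipschitz around $x_0$ and set $y_0:=g(x_0)$. Endow $X\times Y$ with the norm $\|(x,y)\|=\|x\|_X+\|y\|_Y$ and define $\tilde g:X\times Y\to Y$, $\tilde g(x,y)=g(x)-y$. Then the following are equivalent: (i) there exist $a>0$, $s>0$ such that $d_{g^{-1}(D)\cap C}(x)\le a\,d_D(g(x))$ for all $x\in B_X(x_0,s)\cap C$; (ii) there exist $a'>0$, $s'>0$ such that $d_{\tilde g^{-1}(0)\cap(C\times D)}(x,y)\le a'\|\tilde g(x,y)\|_Y$ for all $(x,y)\in B_{X\times Y}((x_0,y_0),s')\cap(C\times D)$.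
   Context: For a nonempty set $A$ in a normed space, $d_A(z)=\inf_{a\in A}\|z-a\|$; $B(z,r)$ denotes the closed ball of radius $r$ centred at $z$. *)

theory Defs
  imports "HOL-Analysis.Analysis"
begin

text \<open>Distance to a set in X \<times> Y with respect to the sum norm
  norm (x,y) = norm x + norm y (Isabelle's built-in product norm is the Euclidean one,
  so we make the sum norm explicit).  Convention as for infdist: 0 for the empty set.\<close>
definition sum_norm_dist :: "('a::real_normed_vector \<times> 'b::real_normed_vector) \<Rightarrow> ('a \<times> 'b) set \<Rightarrow> real" where
  "sum_norm_dist p A = (if A = {} then 0
     else (INF q\<in>A. norm (fst p - fst q) + norm (snd p - snd q)))"

definition sum_norm_cball :: "('a::real_normed_vector \<times> 'b::real_normed_vector) \<Rightarrow> real \<Rightarrow> ('a \<times> 'b) set" where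
  "sum_norm_cball p r = {q. norm (fst q - fst p) + norm (snd q - snd p) \<le> r}"

end

theory Submission
  imports Defs
begin

text \<open>Let \<open>S = g\<inverse>(D) \<inter> C\<close>; the set \<open>T = g\<inverse>(0) \<inter> (C \<times> D)\<close> is the graph of \<open>g\<close> over \<open>S\<close>.
  Projecting to the first factor gives \<open>d\<^sub>S(x) \<le> d\<^sub>T(x,y)\<close>, and conversely the graph point
  over a near point \<open>x'\<close> of \<open>S\<close> gives \<open>d\<^sub>T(x,y) \<le> (1 + L) d\<^sub>S(x) + \<parallel>g x - y\<parallel>\<close>.
  Combined with \<open>d\<^sub>D(g x) \<le> \<parallel>g x - y\<parallel>\<close> for \<open>y \<in> D\<close>, these turn either error bound into the other.
  The only subtlety is locality: all near points may be taken in a ball of twice the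
  distance to the base point, so they stay inside the ball where \<open>g\<close> is Lipschitz and
  where the assumed error bound holds.\<close>

lemma infdist_greatest:
  assumes "A \<noteq> {}" "\<And>a. a \<in> A \<Longrightarrow> d \<le> dist x a"
  shows "d \<le> infdist x A"
  using assms by (simp add: infdist_notempty cINF_greatest)

lemma infdist_inter_cball:
  assumes "a \<in> A"
  shows "infdist x (A \<inter> cball a (2 * dist x a)) = infdist x A"
proof (rule antisym)
  let ?B = "cball a (2 * dist x a)"
  have a: "a \<in> A \<inter> ?B" using assms by simp
  show "infdist x (A \<inter> ?B) \<le> infdist x A"
  proof (rule infdist_greatest)
    fix b assume b: "b \<in> A"
    show "infdist x (A \<inter> ?B) \<le> dist x b"
    proof (cases "dist x b \<le> dist x a")
      case True
      then have "b \<in> ?B" using dist_triangle[of a b x] by (simp add: dist_commute)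
      then show ?thesis using b by (intro infdist_le) simp
    next
      case False
      then show ?thesis using infdist_le[OF a, of x] by simp
    qed
  qed (use assms in auto)
  show "infdist x A \<le> infdist x (A \<inter> ?B)"
    using a by (intro infdist_mono) auto
qed

lemma sum_norm_dist_le:
  assumes "q \<in> T"
  shows "sum_norm_dist p T \<le> norm (fst p - fst q) + norm (snd p - snd q)"
  unfolding sum_norm_dist_def using assms
  by (auto intro!: cINF_lower bdd_belowI2[of _ 0])

lemma infdist_le_sum_norm_dist:
  assumes "T \<noteq> {}" "fst ` T \<subseteq> S"
  shows "infdist x S \<le> sum_norm_dist (x, y) T"
  unfolding sum_norm_dist_def using assms(1)
proof (simp, intro cINF_greatest)
  fix q assume q: "q \<in> T"
  have "infdist x S \<le> dist x (fst q)" using assms q by (intro infdist_le) auto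
  also have "\<dots> \<le> norm (x - fst q) + norm (y - snd q)" by (simp add: dist_norm)
  finally show "infdist x S \<le> norm (x - fst q) + norm (y - snd q)" .
qed

lemma sum_norm_dist_le_graph:
  assumes g: "L-lipschitz_on U g" and "x \<in> U" "A \<subseteq> U" "A \<noteq> {}"
    and graph: "\<And>a. a \<in> A \<Longrightarrow> (a, g a) \<in> T"
  shows "sum_norm_dist (x, y) T \<le> (1 + L) * infdist x A + norm (g x - y)"
proof -
  have L: "0 \<le> L" using lipschitz_on_nonneg[OF g] .
  have "(sum_norm_dist (x, y) T - norm (g x - y)) / (1 + L) \<le> infdist x A"
  proof (rule infdist_greatest[OF \<open>A \<noteq> {}\<close>])
    fix a assume a: "a \<in> A"
    have "sum_norm_dist (x, y) T \<le> norm (x - a) + norm (y - g a)"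
      using sum_norm_dist_le[OF graph[OF a], of "(x, y)"] by simp
    also have "norm (y - g a) \<le> norm (g x - y) + norm (g x - g a)"
      using norm_triangle_ineq4[of "g x - g a" "g x - y"] by (simp add: add.commute)
    also have "norm (g x - g a) \<le> L * norm (x - a)"
      using lipschitz_on_normD[OF g] a assms(2,3) by blast
    finally have "sum_norm_dist (x, y) T - norm (g x - y) \<le> (1 + L) * dist x a"
      by (simp add: dist_norm algebra_simps)
    then show "(sum_norm_dist (x, y) T - norm (g x - y)) / (1 + L) \<le> dist x a"
      using L by (simp add: pos_divide_le_eq mult.commute)
  qed
  then show ?thesis using L by (simp add: pos_divide_le_eq algebra_simps)
qed

lemma error_bound_imp_graph_error_bound:
  fixes g :: "'a::real_normed_vector \<Rightarrow> 'b::real_normed_vector"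
  assumes x0: "x0 \<in> g -` D \<inter> C" and g: "L-lipschitz_on (cball x0 r) g"
    and bound: "\<forall>x \<in> cball x0 s \<inter> C. infdist x (g -` D \<inter> C) \<le> a * infdist (g x) D"
    and "a \<ge> 0"
  shows "\<forall>p \<in> sum_norm_cball (x0, g x0) (min s (r / 2)) \<inter> (C \<times> D).
           sum_norm_dist p ((\<lambda>(x, y). g x - y) -` {0} \<inter> (C \<times> D))
             \<le> ((1 + L) * a + 1) * norm ((\<lambda>(x, y). g x - y) p)"
proof (clarify)
  fix x y assume p: "(x, y) \<in> sum_norm_cball (x0, g x0) (min s (r / 2))" "x \<in> C" "y \<in> D"
  let ?S = "g -` D \<inter> C" and ?T = "(\<lambda>(x, y). g x - y) -` {0} \<inter> (C \<times> D)"
  let ?A = "?S \<inter> cball x0 (2 * dist x x0)"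
  have "norm (x - x0) + norm (y - g x0) \<le> min s (r / 2)"
    using p(1) by (simp add: sum_norm_cball_def)
  then have "dist x x0 \<le> min s (r / 2)"
    using norm_ge_zero[of "y - g x0"] unfolding dist_norm by linarith
  moreover have "0 \<le> dist x x0" by simp
  ultimately have xs: "x \<in> cball x0 s" and xr: "x \<in> cball x0 r" and Ar: "?A \<subseteq> cball x0 r"
    by (auto simp: dist_commute simp del: zero_le_dist)
  have "sum_norm_dist (x, y) ?T \<le> (1 + L) * infdist x ?A + norm (g x - y)"
    using x0 Ar by (intro sum_norm_dist_le_graph[OF g xr]) auto
  also have "\<dots> = (1 + L) * infdist x ?S + norm (g x - y)"
    using x0 by (simp add: infdist_inter_cball)
  also have "\<dots> \<le> (1 + L) * (a * norm (g x - y)) + norm (g x - y)"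
  proof -
    have "infdist x ?S \<le> a * infdist (g x) D" using bound xs p(2) by blast
    also have "\<dots> \<le> a * norm (g x - y)"
      using \<open>a \<ge> 0\<close> infdist_le[OF p(3), of "g x"] by (simp add: dist_norm mult_left_mono)
    finally show ?thesis using lipschitz_on_nonneg[OF g] by (simp add: mult_left_mono)
  qed
  finally show "sum_norm_dist (x, y) ?T \<le> ((1 + L) * a + 1) * norm (g x - y)"
    by (simp add: algebra_simps)
qed

lemma graph_error_bound_imp_error_bound:
  fixes g :: "'a::real_normed_vector \<Rightarrow> 'b::real_normed_vector"
  assumes x0: "x0 \<in> g -` D \<inter> C" and g: "L-lipschitz_on (cball x0 r) g"
    and bound: "\<forall>p \<in> sum_norm_cball (x0, g x0) s \<inter> (C \<times> D).
           sum_norm_dist p ((\<lambda>(x, y). g x - y) -` {0} \<inter> (C \<times> D))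
             \<le> a * norm ((\<lambda>(x, y). g x - y) p)"
    and "a > 0"
  shows "\<forall>x \<in> cball x0 (min r (s / (1 + 2 * L))) \<inter> C.
           infdist x (g -` D \<inter> C) \<le> a * infdist (g x) D"
proof (clarify)
  fix x assume x: "x \<in> cball x0 (min r (s / (1 + 2 * L)))" "x \<in> C"
  let ?S = "g -` D \<inter> C" and ?T = "(\<lambda>(x, y). g x - y) -` {0} \<inter> (C \<times> D)"
  let ?D = "D \<inter> cball (g x0) (2 * dist (g x) (g x0))"
  have L: "0 \<le> L" using lipschitz_on_nonneg[OF g] .
  have "dist x0 x \<le> r" using x(1) by simp
  then have x0r: "x0 \<in> cball x0 r" by (metis centre_in_cball order_trans zero_le_dist)
  have gx: "dist (g x) (g x0) \<le> L * dist x x0"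
    using lipschitz_onD[OF g] x x0r by (simp add: dist_commute)
  have xs: "(1 + 2 * L) * dist x x0 \<le> s"
    using x L by (simp add: dist_commute pos_le_divide_eq mult.commute)
  have "infdist x ?S / a \<le> infdist (g x) ?D"
  proof (rule infdist_greatest)
    show "?D \<noteq> {}" using x0 by auto
    fix y assume y: "y \<in> ?D"
    have "dist x x0 + dist y (g x0) \<le> s"
      using y gx xs by (simp add: dist_commute algebra_simps)
    then have "(x, y) \<in> sum_norm_cball (x0, g x0) s \<inter> (C \<times> D)"
      using x(2) y by (simp add: sum_norm_cball_def dist_norm)
    then have "sum_norm_dist (x, y) ?T \<le> a * dist (g x) y"
      using bound[rule_format, of "(x, y)"] by (simp add: dist_norm)
    moreover have "infdist x ?S \<le> sum_norm_dist (x, y) ?T"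
    proof (rule infdist_le_sum_norm_dist)
      have "(x0, g x0) \<in> ?T" using x0 by simp
      then show "?T \<noteq> {}" by blast
    qed auto
    ultimately show "infdist x ?S / a \<le> dist (g x) y"
      using \<open>a > 0\<close> by (simp add: pos_divide_le_eq mult.commute)
  qed
  also have "infdist (g x) ?D = infdist (g x) D"
    using x0 by (intro infdist_inter_cball) simp
  finally show "infdist x ?S \<le> a * infdist (g x) D"
    using \<open>a > 0\<close> by (simp add: pos_divide_le_eq mult.commute)
qed

theorem lemma3p2:
  fixes g :: "'a::banach \<Rightarrow> 'b::banach"
    and C :: "'a set" and D :: "'b set" and x0 :: 'a
  assumes "C \<noteq> {}" and "closed C" and "D \<noteq> {}"
    and "x0 \<in> g -` D \<inter> C"
    and "\<exists>r>0. \<exists>L. L-lipschitz_on (cball x0 r) g"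
  shows "(\<exists>a>0. \<exists>s>0. \<forall>x \<in> cball x0 s \<inter> C.
            infdist x (g -` D \<inter> C) \<le> a * infdist (g x) D)
     \<longleftrightarrow>
         (\<exists>a'>0. \<exists>s'>0. \<forall>p \<in> sum_norm_cball (x0, g x0) s' \<inter> (C \<times> D).
            sum_norm_dist p ((\<lambda>(x, y). g x - y) -` {0} \<inter> (C \<times> D))
              \<le> a' * norm ((\<lambda>(x, y). g x - y) p))"
  (is "?I \<longleftrightarrow> ?II")
proof -
  obtain r L where r: "r > 0" and g: "L-lipschitz_on (cball x0 r) g"
    using assms(5) by blast
  have L: "0 \<le> L" using lipschitz_on_nonneg[OF g] .
  show ?thesis
  proof
    assume ?I
    then obtain a s where a: "a > 0" and s: "s > 0"
      and bound: "\<forall>x \<in> cball x0 s \<inter> C. infdist x (g -` D \<inter> C) \<le> a * infdist (g x) D"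
      by blast
    have "(1 + L) * a + 1 > 0" using a L by (simp add: add_pos_nonneg)
    moreover have "min s (r / 2) > 0" using r s by simp
    ultimately show ?II
      using error_bound_imp_graph_error_bound[OF assms(4) g bound] a by (intro exI conjI) auto
  next
    assume ?II
    then obtain a s where a: "a > 0" and s: "s > 0"
      and bound: "\<forall>p \<in> sum_norm_cball (x0, g x0) s \<inter> (C \<times> D).
             sum_norm_dist p ((\<lambda>(x, y). g x - y) -` {0} \<inter> (C \<times> D))
               \<le> a * norm ((\<lambda>(x, y). g x - y) p)"
      by blast
    have "min r (s / (1 + 2 * L)) > 0" using r s L by simp
    then show ?I
      using graph_error_bound_imp_error_bound[OF assms(4) g bound a] a by (intro exI conjI) auto
  qed
qed

end
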